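(* Let $k>0$, $(a,d)\in(0,1)\times(0,\infty)$, let $g$ satisfy (Hg), and let $(c,\Phi)$ with $c\in\mathbb R$, $\Phi\in C^1(\mathbb R)$ solve $$-c\Phi'(\xi)=d\big(k\Phi(\xi+1)-(k+1)\Phi(\xi)+\Phi(\xi-1)\big)+g(\Phi(\xi);a)\ (\xi\in\mathbb R),\quad \lim_{\xi\to-\infty}\Phi(\xi)=0,\ \lim_{\xi\to+\infty}\Phi(\xi)=1.$$ Suppose there exist $\bar c\in\mathbb R$ and a bounded $\Psi\in C^1(\mathbb R)$ such that (i) $\sup_{\xi}\Psi(\xi)>0$, (ii) $\Psi(\xi)\le\Phi(\xi)$ for all $\xi$, (iii) $\mathcal I_{a,d,k}[\bar c,\Psi](\xi)\le0$ for all $\xi$. Then $c\le\bar c$. Likewise, if (i') $\inf_\xi\Psi(\xi)<1$, (ii') $\Psi(\xi)\ge\Phi(\xi)$ for all $\xi$, (iii') $\mathcal I_{a,d,k}[\bar c,\Psi](\xi)\ge0$ for all $\xi$, then $c\ge\bar c$.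
   Context: For $c\in\mathbb R$ and $\Phi\in C^1(\mathbb R)$, $\mathcal I_{a,d,k}[c,\Phi](\xi):=-c\Phi'(\xi)-d\big(\Phi(\xi-1)-(k+1)\Phi(\xi)+k\Phi(\xi+1)\big)-g(\Phi(\xi);a)$. A function $g:\mathbb R\times[0,1]\to\mathbb R$, $(u,a)\mapsto g(u;a)$, satisfies (Hg) if it is $C^1$ and for every $a\in(0,1)$: $g(0;a)=g(a;a)=g(1;a)=0$, $g'(0;a)<0$, $g'(1;a)<0$, $g'(a;a)>0$ (where $g'=\partial_u g$), $g(v;a)>0$ for $v\in(-\infty,0)\cup(a,1)$ and $g(v;a)<0$ for $v\in(0,a)\cup(1,\infty)$. *)

theory Defs
  imports "HOL-Analysis.Analysis"
begin

text \<open>g is a function of (u, a), written curried as g u a, defined (at least) on R x [0,1].\<close>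
definition C1_g :: "(real \<Rightarrow> real \<Rightarrow> real) \<Rightarrow> bool" where
  "C1_g g \<longleftrightarrow> (\<exists>gu ga.
     continuous_on (UNIV \<times> {0..1}) (\<lambda>(u,a). gu u a) \<and>
     continuous_on (UNIV \<times> {0..1}) (\<lambda>(u,a). ga u a) \<and>
     (\<forall>u. \<forall>a\<in>{0..1}. ((\<lambda>(u,a). g u a) has_derivative (\<lambda>(h,k). gu u a * h + ga u a * k))
          (at (u,a) within (UNIV \<times> {0..1}))))"

text \<open>Hypothesis (Hg); g' = partial derivative in u, i.e. deriv (\<lambda>u. g u a).\<close>
definition Hg :: "(real \<Rightarrow> real \<Rightarrow> real) \<Rightarrow> bool" where
  "Hg g \<longleftrightarrow> C1_g g \<and>
    (\<forall>a\<in>{0<..<1}.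
       g 0 a = 0 \<and> g a a = 0 \<and> g 1 a = 0 \<and>
       deriv (\<lambda>u. g u a) 0 < 0 \<and> deriv (\<lambda>u. g u a) 1 < 0 \<and> deriv (\<lambda>u. g u a) a > 0 \<and>
       (\<forall>v. (v < 0 \<or> (a < v \<and> v < 1)) \<longrightarrow> g v a > 0) \<and>
       (\<forall>v. ((0 < v \<and> v < a) \<or> 1 < v) \<longrightarrow> g v a < 0))"

definition Iop :: "(real \<Rightarrow> real \<Rightarrow> real) \<Rightarrow> real \<Rightarrow> real \<Rightarrow> real \<Rightarrow> real \<Rightarrow> (real \<Rightarrow> real) \<Rightarrow> real \<Rightarrow> real" where
  "Iop g a d k c \<Phi> \<xi> = - c * deriv \<Phi> \<xi> - d * (\<Phi> (\<xi> - 1) - (k + 1) * \<Phi> \<xi> + k * \<Phi> (\<xi> + 1)) - g (\<Phi> \<xi>) a"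

end

theory Submission
  imports Defs
begin

text \<open>Read \<open>u(t, \<xi>) = \<Phi>(\<xi> - c t)\<close> and \<open>w(t, \<xi>) = \<Psi>(\<xi> - cbar t)\<close> as a solution and a
  sub-solution of the lattice equation \<open>u\<^sub>t = d (k u(\<xi>+1) - (k+1) u(\<xi>) + u(\<xi>-1)) + g(u; a)\<close>.
  The lattice operator is cooperative and \<open>g\<close> is Lipschitz on the bounded ranges, so the
  comparison principle propagates \<open>\<Psi> \<le> \<Phi>\<close> to \<open>\<Psi>(\<xi> - cbar t) \<le> \<Phi>(\<xi> - c t)\<close> for all \<open>t \<ge> 0\<close>.
  If \<open>c > cbar\<close>, following \<open>\<xi> = \<xi>\<^sub>0 + cbar t\<close> drives the argument of \<open>\<Phi>\<close> to \<open>-\<infinity>\<close>, where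
  \<open>\<Phi> \<rightarrow> 0 < \<Psi>(\<xi>\<^sub>0)\<close>. The super-solution case is symmetric, using \<open>\<Phi> \<rightarrow> 1\<close> at \<open>+\<infinity>\<close>.\<close>

lemma last_nonneg_before:
  fixes f :: "real \<Rightarrow> real"
  assumes cont: "continuous_on {T..r} f" and "T \<le> r" and "f T \<ge> 0" and "f r < 0"
  obtains t0 where "T \<le> t0" "t0 < r" "f t0 \<ge> 0" "\<And>q. t0 < q \<Longrightarrow> q \<le> r \<Longrightarrow> f q < 0"
proof -
  define S where "S = {q \<in> {T..r}. 0 \<le> f q}"
  have "closed S"
    unfolding S_def by (intro continuous_on_closed_Collect_le cont continuous_on_const) simp
  moreover have "T \<in> S" "bdd_above S"
    using assms by (auto simp: S_def)
  ultimately have "Sup S \<in> S"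
    using closed_contains_Sup by blast
  moreover have "f q < 0" if "Sup S < q" "q \<le> r" for q
    using that cSup_upper[OF _ \<open>bdd_above S\<close>, of q] \<open>Sup S \<in> S\<close> by (force simp: S_def)
  ultimately show thesis
    using that \<open>f r < 0\<close> by (fastforce simp: S_def le_less)
qed

text \<open>The hypothesis \<open>growth\<close> is a maximum principle for the evolution \<open>r \<mapsto> W(\<cdot>, r)\<close>: where
  \<open>W\<close> is negative it decreases no faster than \<open>C\<close> times the current depth of its negative part.
  Hence that depth grows at most linearly from a nonnegative start, and over a time step of
  length \<open>1/(2C)\<close> it is at most half of itself, i.e. zero.\<close>

lemma neg_part_linear_bound:
  fixes W D :: "'a \<Rightarrow> real \<Rightarrow> real"
  assumes deriv: "\<And>x r. ((\<lambda>r. W x r) has_real_derivative D x r) (at r)"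
    and growth: "\<And>x r N. N \<ge> 0 \<Longrightarrow> W x r < 0 \<Longrightarrow> (\<And>y. W y r \<ge> - N)
      \<Longrightarrow> D x r \<ge> - C * N"
    and "C \<ge> 0" and "N \<ge> 0"
    and bound: "\<And>y q. T \<le> q \<Longrightarrow> q \<le> r \<Longrightarrow> W y q \<ge> - N"
    and start: "\<And>y. W y T \<ge> 0" and "T \<le> r"
  shows "- W x r \<le> C * (r - T) * N"
proof (cases "W x r < 0")
  case False
  have "C * (r - T) * N \<ge> 0"
    using assms(3,4,7) by simp
  then show ?thesis
    using False by linarith
next
  case True
  have "continuous_on {T..r} (\<lambda>q. W x q)"
    using deriv by (meson DERIV_isCont continuous_at_imp_continuous_on)
  then obtain t0 where t0: "T \<le> t0" "t0 < r" "W x t0 \<ge> 0"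
    and neg: "\<And>q. t0 < q \<Longrightarrow> q \<le> r \<Longrightarrow> W x q < 0"
    using last_nonneg_before[of T r "\<lambda>q. W x q"] start True \<open>T \<le> r\<close> by blast
  obtain z where z: "t0 < z" "z < r" and mvt: "W x r - W x t0 = (r - t0) * D x z"
    using MVT2[OF \<open>t0 < r\<close>, of "\<lambda>q. W x q" "D x"] deriv by blast
  have "D x z \<ge> - C * N"
    using growth[OF \<open>N \<ge> 0\<close> neg[OF z(1)]] bound z t0 by simp
  then have "(r - t0) * D x z \<ge> (r - t0) * (- C * N)"
    using t0 by (intro mult_left_mono) auto
  moreover have "(r - t0) * (- C * N) \<ge> (r - T) * (- C * N)"
    using t0 assms(3,4) by (intro mult_right_mono_neg) auto
  ultimately show ?thesis
    using mvt t0 by (simp add: algebra_simps)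
qed

lemma nonneg_persists_step:
  fixes W D :: "'a \<Rightarrow> real \<Rightarrow> real"
  assumes deriv: "\<And>x r. ((\<lambda>r. W x r) has_real_derivative D x r) (at r)"
    and growth: "\<And>x r N. N \<ge> 0 \<Longrightarrow> W x r < 0 \<Longrightarrow> (\<And>y. W y r \<ge> - N)
      \<Longrightarrow> D x r \<ge> - C * N"
    and "C > 0" and lower: "\<And>x r. W x r \<ge> - M"
    and start: "\<And>y. W y T \<ge> 0" and "T \<le> s" "s \<le> T + 1 / (2 * C)"
  shows "W x s \<ge> 0"
proof -
  define \<tau> where "\<tau> = 1 / (2 * C)"
  define P where "P = (UNIV :: 'a set) \<times> {T..T + \<tau>}"
  define N where "N = (SUP p\<in>P. max (- W (fst p) (snd p)) 0)"
  have "P \<noteq> {}"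
    using \<open>C > 0\<close> by (auto simp: P_def \<tau>_def)
  have bdd: "bdd_above ((\<lambda>p. max (- W (fst p) (snd p)) 0) ` P)"
    using lower by (intro bdd_aboveI2[where M = "max M 0"] max.mono) (auto simp: minus_le_iff)
  have upper: "- W y q \<le> N \<and> 0 \<le> N" if "T \<le> q" "q \<le> T + \<tau>" for y q
    unfolding N_def using cSUP_upper[OF _ bdd, of "(y, q)"] that by (simp add: P_def)
  have "N \<ge> 0"
    using upper[of T] \<open>C > 0\<close> by (simp add: \<tau>_def)
  have "max (- W y q) 0 \<le> N / 2" if "T \<le> q" and "q \<le> T + \<tau>" for y q
  proof -
    have "- W y q \<le> C * (q - T) * N"
    proof (rule neg_part_linear_bound[OF deriv growth _ \<open>N \<ge> 0\<close> _ start \<open>T \<le> q\<close>])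
      show "W y' q' \<ge> - N" if "T \<le> q'" "q' \<le> q" for y' q'
        using upper[of q' y'] that \<open>q \<le> T + \<tau>\<close> by simp
    next
      show "0 \<le> C"
        using \<open>C > 0\<close> by linarith
    qed
    also have "\<dots> \<le> C * \<tau> * N"
      using that \<open>C > 0\<close> \<open>N \<ge> 0\<close> by (intro mult_right_mono mult_left_mono) auto
    finally show ?thesis
      using \<open>C > 0\<close> \<open>N \<ge> 0\<close> by (simp add: \<tau>_def)
  qed
  then have "N \<le> N / 2"
    unfolding N_def by (intro cSUP_least[OF \<open>P \<noteq> {}\<close>]) (auto simp: P_def)
  then show ?thesis
    using upper[of s x] assms(6,7) unfolding \<tau>_def by linarith
qed

lemma nonneg_persists:
  fixes W D :: "'a \<Rightarrow> real \<Rightarrow> real"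
  assumes deriv: "\<And>x r. ((\<lambda>r. W x r) has_real_derivative D x r) (at r)"
    and growth: "\<And>x r N. N \<ge> 0 \<Longrightarrow> W x r < 0 \<Longrightarrow> (\<And>y. W y r \<ge> - N)
      \<Longrightarrow> D x r \<ge> - C * N"
    and "C > 0" and lower: "\<And>x r. W x r \<ge> - M"
    and init: "\<And>y. W y 0 \<ge> 0" and "t \<ge> 0"
  shows "W x t \<ge> 0"
proof -
  define \<tau> where "\<tau> = 1 / (2 * C)"
  have "\<tau> > 0"
    using \<open>C > 0\<close> by (simp add: \<tau>_def)
  have on_steps: "W y s \<ge> 0" if "0 \<le> s" "s \<le> real n * \<tau>" for n y s
    using that
  proof (induction n arbitrary: y s)
    case 0
    then show ?case
      using init by simp
  next
    case (Suc n)
    show ?case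
    proof (cases "s \<le> real n * \<tau>")
      case True
      then show ?thesis
        by (rule Suc.IH[OF Suc.prems(1)])
    next
      case False
      have start: "W z (real n * \<tau>) \<ge> 0" for z
        by (rule Suc.IH) (use \<open>\<tau> > 0\<close> in auto)
      have "s \<le> real n * \<tau> + 1 / (2 * C)"
        using Suc.prems(2) unfolding \<tau>_def[symmetric] by (simp add: algebra_simps)
      then show ?thesis
        using False by (intro nonneg_persists_step[OF deriv growth \<open>C > 0\<close> lower start]) auto
    qed
  qed
  obtain n :: nat where "t / \<tau> \<le> real n"
    using real_arch_simple by blast
  then have "t \<le> real n * \<tau>"
    using \<open>\<tau> > 0\<close> by (simp add: divide_le_eq)
  then show ?thesis
    using on_steps \<open>t \<ge> 0\<close> by blast
qed

text \<open>Cooperativity: the neighbours enter with nonnegative weights \<open>d k\<close> and \<open>d\<close>, so a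
  negative gap of depth at most \<open>N\<close> is pulled down by at most \<open>d (k + 1) N\<close>.\<close>

lemma lattice_gap_growth:
  fixes U V G :: "real \<Rightarrow> real"
  assumes "d \<ge> 0" and "k \<ge> 0"
    and lip: "L-lipschitz_on S G" and "U x \<in> S" and "V y \<in> S"
    and super: "DU \<ge> d * (k * U (x + 1) - (k + 1) * U x + U (x - 1)) + G (U x)"
    and sub: "DV \<le> d * (k * V (y + 1) - (k + 1) * V y + V (y - 1)) + G (V y)"
    and neg: "U x < V y"
    and bounds: "U (x + 1) - V (y + 1) \<ge> - N" "U x - V y \<ge> - N"
      "U (x - 1) - V (y - 1) \<ge> - N"
  shows "DU - DV \<ge> - (d * (k + 1) + L) * N"
proof -
  have "k * (U (x + 1) - V (y + 1)) \<ge> k * (- N)"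
    using bounds(1) \<open>k \<ge> 0\<close> by (rule mult_left_mono)
  moreover have "(k + 1) * (U x - V y) \<le> 0"
    using neg \<open>k \<ge> 0\<close> by (simp add: mult_nonneg_nonpos)
  ultimately have "k * (U (x + 1) - V (y + 1)) - (k + 1) * (U x - V y) + (U (x - 1) - V (y - 1))
      \<ge> - (k + 1) * N"
    using bounds(3) by (simp add: algebra_simps)
  then have "d * (k * (U (x + 1) - V (y + 1)) - (k + 1) * (U x - V y) + (U (x - 1) - V (y - 1)))
      \<ge> d * (- (k + 1) * N)"
    using \<open>d \<ge> 0\<close> by (rule mult_left_mono)
  moreover have "G (U x) - G (V y) \<ge> - L * N"
  proof -
    have "dist (G (U x)) (G (V y)) \<le> L * dist (U x) (V y)"
      using lipschitz_onD[OF lip] assms(4,5) .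
    then have "\<bar>G (U x) - G (V y)\<bar> \<le> L * \<bar>U x - V y\<bar>"
      by (simp add: dist_real_def)
    also have "\<dots> \<le> L * N"
      using neg bounds(2) lipschitz_on_nonneg[OF lip] by (intro mult_left_mono) auto
    finally show ?thesis
      by linarith
  qed
  ultimately show ?thesis
    using super sub by (simp add: algebra_simps)
qed

lemma lattice_wave_comparison:
  fixes U V U' V' G :: "real \<Rightarrow> real"
  assumes "d \<ge> 0" and "k \<ge> 0"
    and dU: "\<And>x. (U has_real_derivative U' x) (at x)"
    and dV: "\<And>x. (V has_real_derivative V' x) (at x)"
    and "bounded (range U)" and "bounded (range V)"
    and lip: "L-lipschitz_on S G" and "range U \<subseteq> S" and "range V \<subseteq> S"
    and super: "\<And>x. - cu * U' x \<ge> d * (k * U (x + 1) - (k + 1) * U x + U (x - 1)) + G (U x)"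
    and sub: "\<And>x. - cv * V' x \<le> d * (k * V (x + 1) - (k + 1) * V x + V (x - 1)) + G (V x)"
    and init: "\<And>x. V x \<le> U x" and "t \<ge> 0"
  shows "V (\<xi> - cv * t) \<le> U (\<xi> - cu * t)"
proof -
  \<comment> \<open>the gap between the two profiles after time \<open>r\<close>, viewed as solutions of
    \<open>u\<^sub>r = d (k u(\<xi>+1) - (k+1) u(\<xi>) + u(\<xi>-1)) + G u\<close>\<close>
  define W where "W \<xi> r = U (\<xi> - cu * r) - V (\<xi> - cv * r)" for \<xi> r
  define D where "D \<xi> r = - cu * U' (\<xi> - cu * r) + cv * V' (\<xi> - cv * r)" for \<xi> r
  \<comment> \<open>the \<open>+ 1\<close> keeps \<open>C\<close> positive when \<open>d = L = 0\<close>\<close>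
  define C where "C = d * (k + 1) + L + 1"
  have "L \<ge> 0"
    using lip by (rule lipschitz_on_nonneg)
  then have "C > 0"
    using assms(1,2) by (simp add: C_def add_nonneg_pos)
  obtain MU MV where MU: "\<And>x. \<bar>U x\<bar> \<le> MU" and MV: "\<And>x. \<bar>V x\<bar> \<le> MV"
    using \<open>bounded (range U)\<close> \<open>bounded (range V)\<close> unfolding bounded_iff by auto
  have lower: "W \<xi> r \<ge> - (MU + MV)" for \<xi> r
    unfolding W_def using MU[of "\<xi> - cu * r"] MV[of "\<xi> - cv * r"] by linarith
  have deriv: "((\<lambda>r. W \<xi> r) has_real_derivative D \<xi> r) (at r)" for \<xi> r
  proof -
    have "((\<lambda>r. U (\<xi> - cu * r)) has_real_derivative U' (\<xi> - cu * r) * (- cu)) (at r)"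
      by (rule DERIV_chain2[OF dU]) (auto intro!: derivative_eq_intros)
    moreover have "((\<lambda>r. V (\<xi> - cv * r)) has_real_derivative V' (\<xi> - cv * r) * (- cv)) (at r)"
      by (rule DERIV_chain2[OF dV]) (auto intro!: derivative_eq_intros)
    ultimately show ?thesis
      unfolding W_def D_def using DERIV_diff by (fastforce simp: algebra_simps)
  qed
  have growth: "D \<xi> r \<ge> - C * N"
    if "N \<ge> 0" and "W \<xi> r < 0" and bound: "\<And>\<eta>. W \<eta> r \<ge> - N" for \<xi> r N
  proof -
    define x where "x = \<xi> - cu * r"
    define y where "y = \<xi> - cv * r"
    have "W (\<xi> + 1) r = U (x + 1) - V (y + 1)" "W \<xi> r = U x - V y"
      "W (\<xi> - 1) r = U (x - 1) - V (y - 1)"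
      unfolding W_def x_def y_def by (simp_all add: algebra_simps)
    then have "- cu * U' x - (- cv * V' y) \<ge> - (d * (k + 1) + L) * N"
      using assms(8,9) \<open>W \<xi> r < 0\<close> bound[of "\<xi> + 1"] bound[of \<xi>] bound[of "\<xi> - 1"]
      by (intro lattice_gap_growth[OF assms(1,2) lip _ _ super sub]) auto
    then show ?thesis
      using \<open>N \<ge> 0\<close> unfolding C_def D_def x_def y_def by (simp add: algebra_simps)
  qed
  have "W \<xi> t \<ge> 0"
  proof (rule nonneg_persists[OF deriv growth \<open>C > 0\<close> lower _ \<open>t \<ge> 0\<close>])
    show "W \<eta> 0 \<ge> 0" for \<eta>
      using init[of \<eta>] by (simp add: W_def)
  qed
  then show ?thesis
    by (simp add: W_def)
qed

lemma speed_le_if_ordered_at_bot: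
  fixes U V :: "real \<Rightarrow> real"
  assumes ordered: "\<And>\<xi> t. t \<ge> 0 \<Longrightarrow> V (\<xi> - cv * t) \<le> U (\<xi> - cu * t)"
    and lim: "(U \<longlongrightarrow> l) at_bot" and "V x > l"
  shows "cu \<le> cv"
proof (rule ccontr)
  assume "\<not> cu \<le> cv"
  have behind: "V x \<le> U (x - s)" if "s \<ge> 0" for s
  proof -
    define t where "t = s / (cu - cv)"
    have "t \<ge> 0" and "(cu - cv) * t = s"
      using \<open>\<not> cu \<le> cv\<close> that by (auto simp: t_def)
    then show ?thesis
      using ordered[of t "x + cv * t"] by (simp add: algebra_simps)
  qed
  obtain R where "\<And>y. y \<le> R \<Longrightarrow> U y < V x"
    using order_tendstoD(2)[OF lim \<open>V x > l\<close>] unfolding eventually_at_bot_linorder by blast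
  then have "U (x - \<bar>x - R\<bar>) < V x"
    by simp
  with behind[of "\<bar>x - R\<bar>"] show False
    by simp
qed

lemma speed_le_if_ordered_at_top:
  fixes U V :: "real \<Rightarrow> real"
  assumes ordered: "\<And>\<xi> t. t \<ge> 0 \<Longrightarrow> V (\<xi> - cv * t) \<le> U (\<xi> - cu * t)"
    and lim: "(V \<longlongrightarrow> l) at_top" and "U x < l"
  shows "cu \<le> cv"
proof -
  \<comment> \<open>reflecting \<open>\<xi> \<mapsto> -\<xi>\<close>, \<open>u \<mapsto> -u\<close> swaps \<open>U\<close> and \<open>V\<close> and turns \<open>at_top\<close> into \<open>at_bot\<close>\<close>
  have "- cv \<le> - cu"
  proof (rule speed_le_if_ordered_at_bot[where U = "\<lambda>\<xi>. - V (- \<xi>)" and V = "\<lambda>\<xi>. - U (- \<xi>)"])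
    show "- U (- (\<xi> - - cu * t)) \<le> - V (- (\<xi> - - cv * t))" if "t \<ge> 0" for \<xi> t
      using ordered[OF that, of "- \<xi>"] by (simp add: algebra_simps)
    show "((\<lambda>\<xi>. - V (- \<xi>)) \<longlongrightarrow> - l) at_bot"
      unfolding filterlim_at_bot_mirror by (simp add: tendsto_minus lim)
    show "- U (- (- x)) > - l"
      using \<open>U x < l\<close> by simp
  qed
  then show ?thesis
    by simp
qed

lemma bounded_range_if_tendsto_at_bot_at_top:
  fixes f :: "real \<Rightarrow> 'a::metric_space"
  assumes "continuous_on UNIV f" and "(f \<longlongrightarrow> l1) at_bot" and "(f \<longlongrightarrow> l2) at_top"
  shows "bounded (range f)"
proof -
  obtain R1 where R1: "\<And>x. x \<le> R1 \<Longrightarrow> dist (f x) l1 < 1"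
    using tendstoD[OF assms(2) zero_less_one] unfolding eventually_at_bot_linorder by blast
  obtain R2 where R2: "\<And>x. x \<ge> R2 \<Longrightarrow> dist (f x) l2 < 1"
    using tendstoD[OF assms(3) zero_less_one] unfolding eventually_at_top_linorder by blast
  have "f x \<in> cball l1 1 \<union> f ` {R1..R2} \<union> cball l2 1" for x
    using R1[of x] R2[of x] by (cases "x \<le> R1"; cases "x \<ge> R2") (auto simp: dist_commute)
  then have "range f \<subseteq> cball l1 1 \<union> f ` {R1..R2} \<union> cball l2 1"
    by blast
  moreover have "bounded (f ` {R1..R2})"
    by (intro compact_imp_bounded compact_continuous_image continuous_on_subset[OF assms(1)]) auto
  ultimately show ?thesis
    by (meson bounded_Un bounded_cball bounded_subset)
qed

lemma lipschitz_on_if_continuous_derivative: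
  fixes f f' :: "real \<Rightarrow> real"
  assumes "\<And>x. x \<in> S \<Longrightarrow> (f has_real_derivative f' x) (at x)"
    and "continuous_on S f'" and "compact S" and "convex S"
  obtains L where "L-lipschitz_on S f"
proof -
  obtain M where M: "\<And>x. x \<in> S \<Longrightarrow> norm (f' x) \<le> M"
    using compact_imp_bounded[OF compact_continuous_image[OF assms(2,3)]]
    unfolding bounded_iff by auto
  have "dist (f x) (f y) \<le> max M 0 * dist x y" if "x \<in> S" "y \<in> S" for x y
    unfolding dist_norm
    using assms(1,4) M that
    by (intro field_differentiable_bound[where f' = f'])
      (auto intro: has_field_derivative_at_within simp: le_max_iff_disj)
  then show thesis
    by (intro that lipschitz_onI) auto
qed

lemma C1_g_partial_derivative:
  assumes "C1_g g" and "a \<in> {0..1}"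
  obtains g' where "\<And>u. ((\<lambda>u. g u a) has_real_derivative g' u) (at u)" and "continuous_on UNIV g'"
proof -
  obtain gu ga where cont: "continuous_on (UNIV \<times> {0..1}) (\<lambda>(u, a). gu u a)"
    and deriv: "\<And>u a. a \<in> {0..1} \<Longrightarrow>
      ((\<lambda>(u, a). g u a) has_derivative (\<lambda>(h, k). gu u a * h + ga u a * k))
        (at (u, a) within UNIV \<times> {0..1})"
    using assms(1) unfolding C1_g_def by blast
  have "((\<lambda>u. g u a) has_real_derivative gu u a) (at u)" for u
  proof -
    have "((\<lambda>u. (u, a)) has_derivative (\<lambda>h. (h, 0))) (at u)"
      by (auto intro!: derivative_eq_intros)
    moreover have "((\<lambda>(u, a). g u a) has_derivative (\<lambda>(h, k). gu u a * h + ga u a * k))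
        (at (u, a) within range (\<lambda>u. (u, a)))"
      using assms(2) by (intro has_derivative_subset[OF deriv]) auto
    ultimately have "((\<lambda>u. g u a) has_derivative (\<lambda>h. gu u a * h)) (at u)"
      using has_derivative_in_compose by fastforce
    then show ?thesis
      by (simp add: has_field_derivative_def)
  qed
  moreover have "continuous_on UNIV (\<lambda>u. (\<lambda>(u, a). gu u a) (u, a))"
    using assms(2) by (intro continuous_on_compose2[OF cont] continuous_intros) auto
  ultimately show thesis
    using that[of "\<lambda>u. gu u a"] by simp
qed

lemma C1_g_lipschitz_on_bounded:
  assumes "C1_g g" and "a \<in> {0..1}" and "bounded S"
  obtains L where "L-lipschitz_on S (\<lambda>u. g u a)"
proof -
  obtain u0 R where "S \<subseteq> cball u0 R"
    using \<open>bounded S\<close> unfolding bounded_subset_cball by blast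
  obtain g' where g': "\<And>u. ((\<lambda>u. g u a) has_real_derivative g' u) (at u)" "continuous_on UNIV g'"
    using C1_g_partial_derivative[OF assms(1,2)] by blast
  obtain L where "L-lipschitz_on (cball u0 R) (\<lambda>u. g u a)"
    by (rule lipschitz_on_if_continuous_derivative[where S = "cball u0 R", OF g'(1)
          continuous_on_subset[OF g'(2)]]) auto
  then show thesis
    using that lipschitz_on_subset \<open>S \<subseteq> cball u0 R\<close> by blast
qed

lemma Iop_eq_residual:
  "Iop g a d k c U \<xi>
     = - c * deriv U \<xi> - (d * (k * U (\<xi> + 1) - (k + 1) * U \<xi> + U (\<xi> - 1)) + g (U \<xi>) a)"
  by (simp add: Iop_def algebra_simps)

theorem corollary3p3:
  fixes g :: "real \<Rightarrow> real \<Rightarrow> real" and a d k c cbar :: real and \<Phi> \<Psi> :: "real \<Rightarrow> real"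
  assumes "k > 0" and "0 < a" and "a < 1" and "d > 0"
    and "Hg g"
    and "\<Phi> C1_differentiable_on UNIV"
    and "\<forall>\<xi>. - c * deriv \<Phi> \<xi> = d * (k * \<Phi> (\<xi> + 1) - (k + 1) * \<Phi> \<xi> + \<Phi> (\<xi> - 1)) + g (\<Phi> \<xi>) a"
    and "(\<Phi> \<longlongrightarrow> 0) at_bot" and "(\<Phi> \<longlongrightarrow> 1) at_top"
    and "\<Psi> C1_differentiable_on UNIV" and "bounded (range \<Psi>)"
  shows "((SUP \<xi>. \<Psi> \<xi>) > 0 \<and> (\<forall>\<xi>. \<Psi> \<xi> \<le> \<Phi> \<xi>) \<and> (\<forall>\<xi>. Iop g a d k cbar \<Psi> \<xi> \<le> 0) \<longrightarrow> c \<le> cbar)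
       \<and> ((INF \<xi>. \<Psi> \<xi>) < 1 \<and> (\<forall>\<xi>. \<Psi> \<xi> \<ge> \<Phi> \<xi>) \<and> (\<forall>\<xi>. Iop g a d k cbar \<Psi> \<xi> \<ge> 0) \<longrightarrow> c \<ge> cbar)"
proof -
  have d\<Phi>: "(\<Phi> has_real_derivative deriv \<Phi> x) (at x)"
    and d\<Psi>: "(\<Psi> has_real_derivative deriv \<Psi> x) (at x)" for x
    using assms(6,10) by (simp_all add: C1_differentiable_on_eq DERIV_deriv_iff_real_differentiable)
  have "bounded (range \<Phi>)"
    using C1_differentiable_imp_continuous_on[OF assms(6)] assms(8,9)
    by (rule bounded_range_if_tendsto_at_bot_at_top)
  have "C1_g g"
    using assms(5) by (simp add: Hg_def)
  then obtain L where lip: "L-lipschitz_on (range \<Phi> \<union> range \<Psi>) (\<lambda>u. g u a)"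
    by (rule C1_g_lipschitz_on_bounded[where a = a and S = "range \<Phi> \<union> range \<Psi>"])
      (use assms(2,3,11) \<open>bounded (range \<Phi>)\<close> in auto)
  note comparison = lattice_wave_comparison[where G = "\<lambda>u. g u a",
      OF less_imp_le[OF assms(4)] less_imp_le[OF assms(1)] _ _ _ _ lip]
  show ?thesis
  proof (intro conjI impI)
    assume H: "(SUP \<xi>. \<Psi> \<xi>) > 0 \<and> (\<forall>\<xi>. \<Psi> \<xi> \<le> \<Phi> \<xi>) \<and> (\<forall>\<xi>. Iop g a d k cbar \<Psi> \<xi> \<le> 0)"
    then obtain \<xi>0 where "\<Psi> \<xi>0 > 0"
      using bounded_imp_bdd_above[OF assms(11)] by (auto simp: less_cSUP_iff)
    have "\<Psi> (\<xi> - cbar * t) \<le> \<Phi> (\<xi> - c * t)" if "t \<ge> 0" for \<xi> t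
      using H assms(7) that Iop_eq_residual[of g a d k cbar \<Psi>]
      by (intro comparison[OF d\<Phi> d\<Psi> \<open>bounded (range \<Phi>)\<close> assms(11)]) (auto simp: le_diff_eq)
    then show "c \<le> cbar"
      using assms(8) \<open>\<Psi> \<xi>0 > 0\<close> by (rule speed_le_if_ordered_at_bot)
  next
    assume H: "(INF \<xi>. \<Psi> \<xi>) < 1 \<and> (\<forall>\<xi>. \<Psi> \<xi> \<ge> \<Phi> \<xi>) \<and> (\<forall>\<xi>. Iop g a d k cbar \<Psi> \<xi> \<ge> 0)"
    then obtain \<xi>0 where "\<Psi> \<xi>0 < 1"
      using bounded_imp_bdd_below[OF assms(11)] by (auto simp: cINF_less_iff)
    have "\<Phi> (\<xi> - c * t) \<le> \<Psi> (\<xi> - cbar * t)" if "t \<ge> 0" for \<xi> t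
      using H assms(7) that Iop_eq_residual[of g a d k cbar \<Psi>]
      by (intro comparison[OF d\<Psi> d\<Phi> assms(11) \<open>bounded (range \<Phi>)\<close>]) auto
    then show "cbar \<le> c"
      using assms(9) \<open>\<Psi> \<xi>0 < 1\<close> by (rule speed_le_if_ordered_at_top)
  qed
qed

end
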